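(* There exist a financial system $S$ with payment priorities and a bank $v$ such that: $S$ has exactly one solution $r$; and for some system $S'$ obtained from $S$ by changing the priorities of (some of) the contracts whose debtor is $v$ (everything else unchanged), $S'$ has exactly one solution $r'$ and $r'_v>r_v$.
   Context: A financial system with payment priorities consists of: a finite set $V$ of banks; external assets $e_v\ge 0$ for each $v\in V$; a number $P\ge 1$ of priority levels; and a finite set of contracts, each of which is either a debt contract from a debtor $u$ to a creditor $v\neq u$ with weight $c>0$, or a credit default swap (CDS) from a debtor $u$ to a creditor $v\neq u$ in reference to a bank $w\notin\{u,v\}$ (the reference entity) with weight $c>0$. Every contract has a priority in $\{1,\dots,P\}$ (1 is the highest priority). It is assumed that every bank that is the reference entity of some CDS is the debtor of at least one debt contract of positive weight. Given a recovery rate vector $r\in[0,1]^V$: the liability of a contract $k$ is $l_k(r)=c$ if $k$ is a debt of weight $c$, and $l_k(r)=c\,(1-r_w)$ if $k$ is a CDS of weight $c$ in reference to $w$. For a bank $v$, $l_v(r)$ is the sum of the liabilities of the contracts with debtor $v$; $l_v^{(\rho)}(r)$ is the sum of the liabilities of contracts with debtor $v$ and priority $\rho$; and $l_v^{(\le\rho)}(r)=\sum_{i=1}^{\rho}l_v^{(i)}(r)$ (with $l_v^{(\le 0)}=0$). The payment on a contract $k$ with debtor $v$ and priority $\rho$ is $p_k(r)=l_k(r)\cdot\min\{1,\max\{0,(r_v l_v(r)-l_v^{(\le\rho-1)}(r))/l_v^{(\rho)}(r)\}\}$ (and $p_k(r)=0$ if $l_v^{(\rho)}(r)=0$). The assets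 of $v$ are $a_v(r)=e_v+\sum_k p_k(r)$, summing over contracts $k$ with creditor $v$. A vector $r\in[0,1]^V$ is a solution (clearing vector) if for every $v\in V$: $r_v=1$ when $a_v(r)\ge l_v(r)$, and $r_v=a_v(r)/l_v(r)$ when $a_v(r)<l_v(r)$. The payoff of $v$ is $q_v(r)=\max\{a_v(r)-l_v(r),0\}$. When $P=1$, payments reduce to $p_k(r)=r_v\,l_k(r)$ (principle of proportionality); this is called the base model. *)

theory Defs
  imports Main "HOL.Real"
begin

text \<open>A contract is either a debt contract
  Debt u v c rho (debtor u, creditor v, weight c, priority rho) or a CDS
  CDS u v w c rho (debtor u, creditor v, reference entity w, weight c, priority rho).\<close>

datatype contract =
    Debt nat nat real nat
  | CDS nat nat nat real nat

fun debtor :: "contract \<Rightarrow> nat" where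
  "debtor (Debt u v c p) = u"
| "debtor (CDS u v w c p) = u"

fun creditor :: "contract \<Rightarrow> nat" where
  "creditor (Debt u v c p) = v"
| "creditor (CDS u v w c p) = v"

fun weight :: "contract \<Rightarrow> real" where
  "weight (Debt u v c p) = c"
| "weight (CDS u v w c p) = c"

fun prio :: "contract \<Rightarrow> nat" where
  "prio (Debt u v c p) = p"
| "prio (CDS u v w c p) = p"

fun is_debt :: "contract \<Rightarrow> bool" where
  "is_debt (Debt u v c p) = True"
| "is_debt (CDS u v w c p) = False"

fun set_prio :: "nat \<Rightarrow> contract \<Rightarrow> contract" where
  "set_prio q (Debt u v c p) = Debt u v c q"
| "set_prio q (CDS u v w c p) = CDS u v w c q"

text \<open>A financial system with payment priorities: banks V, external assets e,
  number of priority levels P, and a finite (multi)set of contracts given as a list.\<close>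
record fsys =
  banks :: "nat set"
  ext :: "nat \<Rightarrow> real"
  nprio :: nat
  contracts :: "contract list"

fun contract_ok :: "nat set \<Rightarrow> nat \<Rightarrow> contract \<Rightarrow> bool" where
  "contract_ok V P (Debt u v c p) \<longleftrightarrow>
     u \<in> V \<and> v \<in> V \<and> u \<noteq> v \<and> c > 0 \<and> 1 \<le> p \<and> p \<le> P"
| "contract_ok V P (CDS u v w c p) \<longleftrightarrow>
     u \<in> V \<and> v \<in> V \<and> w \<in> V \<and> u \<noteq> v \<and> w \<noteq> u \<and> w \<noteq> v \<and> c > 0 \<and> 1 \<le> p \<and> p \<le> P"

definition wf_fsys :: "fsys \<Rightarrow> bool" where
  "wf_fsys S \<longleftrightarrow>
     finite (banks S) \<and>
     (\<forall>v\<in>banks S. ext S v \<ge> 0) \<and>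
     nprio S \<ge> 1 \<and>
     (\<forall>k\<in>set (contracts S). contract_ok (banks S) (nprio S) k) \<and>
     (\<forall>k\<in>set (contracts S). \<forall>u v w c p. k = CDS u v w c p \<longrightarrow>
        (\<exists>k'\<in>set (contracts S). is_debt k' \<and> debtor k' = w \<and> weight k' > 0))"

fun liab :: "(nat \<Rightarrow> real) \<Rightarrow> contract \<Rightarrow> real" where
  "liab r (Debt u v c p) = c"
| "liab r (CDS u v w c p) = c * (1 - r w)"

definition liab_bank :: "fsys \<Rightarrow> (nat \<Rightarrow> real) \<Rightarrow> nat \<Rightarrow> real" where
  "liab_bank S r v = sum_list (map (liab r) (filter (\<lambda>k. debtor k = v) (contracts S)))"

definition liab_prio :: "fsys \<Rightarrow> (nat \<Rightarrow> real) \<Rightarrow> nat \<Rightarrow> nat \<Rightarrow> real" where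
  "liab_prio S r v \<rho> =
     sum_list (map (liab r) (filter (\<lambda>k. debtor k = v \<and> prio k = \<rho>) (contracts S)))"

definition liab_upto :: "fsys \<Rightarrow> (nat \<Rightarrow> real) \<Rightarrow> nat \<Rightarrow> nat \<Rightarrow> real" where
  "liab_upto S r v \<rho> = (\<Sum>i=1..\<rho>. liab_prio S r v i)"

definition payment :: "fsys \<Rightarrow> (nat \<Rightarrow> real) \<Rightarrow> contract \<Rightarrow> real" where
  "payment S r k =
     (let v = debtor k; \<rho> = prio k in
      if liab_prio S r v \<rho> = 0 then 0
      else liab r k * min 1 (max 0 ((r v * liab_bank S r v - liab_upto S r v (\<rho> - 1))
                                     / liab_prio S r v \<rho>)))"

definition assets :: "fsys \<Rightarrow> (nat \<Rightarrow> real) \<Rightarrow> nat \<Rightarrow> real" where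
  "assets S r v = ext S v + sum_list (map (payment S r) (filter (\<lambda>k. creditor k = v) (contracts S)))"

definition is_solution :: "fsys \<Rightarrow> (nat \<Rightarrow> real) \<Rightarrow> bool" where
  "is_solution S r \<longleftrightarrow>
     (\<forall>v\<in>banks S. 0 \<le> r v \<and> r v \<le> 1 \<and>
        (assets S r v \<ge> liab_bank S r v \<longrightarrow> r v = 1) \<and>
        (assets S r v < liab_bank S r v \<longrightarrow> r v = assets S r v / liab_bank S r v))"

text \<open>r is the unique solution of S (solutions are vectors indexed by the banks,
  so they are compared on banks S only).\<close>
definition unique_solution :: "fsys \<Rightarrow> (nat \<Rightarrow> real) \<Rightarrow> bool" where
  "unique_solution S r \<longleftrightarrow>
     is_solution S r \<and> (\<forall>r'. is_solution S r' \<longrightarrow> (\<forall>v\<in>banks S. r' v = r v))"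

definition reprioritized :: "fsys \<Rightarrow> nat \<Rightarrow> fsys \<Rightarrow> bool" where
  "reprioritized S v S' \<longleftrightarrow>
     banks S' = banks S \<and> ext S' = ext S \<and> nprio S' = nprio S \<and>
     length (contracts S') = length (contracts S) \<and>
     (\<forall>i < length (contracts S).
        (\<exists>q. contracts S' ! i = set_prio q (contracts S ! i)) \<and>
        (debtor (contracts S ! i) \<noteq> v \<longrightarrow> contracts S' ! i = contracts S ! i))"

end

theory Submission
  imports Defs
begin

text \<open>Bank 0 has external assets 1/2 and owes 1 to each of banks 1 and 2; bank 1 owes 2 back
  to bank 0. Under proportional payments bank 0 splits its funds evenly, so only half of them
  flow back through bank 1, and the unique clearing vector is r = (1/2, 1/4, 1). Demoting the
  debt to bank 2 makes bank 0 pay bank 1 first; more money returns to bank 0, and the unique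
  clearing vector becomes r' = (3/4, 1/2, 1).\<close>

definition proportional_system :: fsys where
  "proportional_system = \<lparr>banks = {0, 1, 2}, ext = (\<lambda>i. if i = 0 then 1/2 else 0), nprio = 2,
     contracts = [Debt 0 1 1 1, Debt 0 2 1 1, Debt 1 0 2 1]\<rparr>"

definition prioritized_system :: fsys where
  "prioritized_system = \<lparr>banks = {0, 1, 2}, ext = (\<lambda>i. if i = 0 then 1/2 else 0), nprio = 2,
     contracts = [Debt 0 1 1 1, Debt 0 2 1 2, Debt 1 0 2 1]\<rparr>"

definition clears_at :: "fsys \<Rightarrow> (nat \<Rightarrow> real) \<Rightarrow> nat \<Rightarrow> bool" where
  "clears_at S r v \<longleftrightarrow> 0 \<le> r v \<and> r v \<le> 1 \<and>
     (assets S r v \<ge> liab_bank S r v \<longrightarrow> r v = 1) \<and>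
     (assets S r v < liab_bank S r v \<longrightarrow> r v = assets S r v / liab_bank S r v)"

lemma is_solution_iff_clears_at: "is_solution S r \<longleftrightarrow> (\<forall>v\<in>banks S. clears_at S r v)"
  unfolding is_solution_def clears_at_def ..

lemma unique_solutionI:
  assumes "\<And>r. is_solution S r \<longleftrightarrow> (\<forall>v\<in>banks S. r v = s v)"
  shows "unique_solution S s"
  using assms unfolding unique_solution_def by auto

lemma banks_proportional_system: "banks proportional_system = {0, 1, 2}"
  by (simp add: proportional_system_def)

lemma banks_prioritized_system: "banks prioritized_system = {0, 1, 2}"
  by (simp add: prioritized_system_def)

lemma proportional_system_balance:
  "liab_bank proportional_system r 0 = 2" "liab_bank proportional_system r 1 = 2"
  "liab_bank proportional_system r 2 = 0"
  "assets proportional_system r 0 = 1/2 + 2 * min 1 (max 0 (r 1))"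
  "assets proportional_system r 1 = min 1 (max 0 (r 0))"
  "assets proportional_system r 2 = min 1 (max 0 (r 0))"
  by (simp_all add: proportional_system_def liab_bank_def assets_def payment_def
      liab_prio_def liab_upto_def)

lemma prioritized_system_balance:
  "liab_bank prioritized_system r 0 = 2" "liab_bank prioritized_system r 1 = 2"
  "liab_bank prioritized_system r 2 = 0"
  "assets prioritized_system r 0 = 1/2 + 2 * min 1 (max 0 (r 1))"
  "assets prioritized_system r 1 = min 1 (max 0 (2 * r 0))"
  "assets prioritized_system r 2 = min 1 (max 0 (2 * r 0 - 1))"
  by (simp_all add: prioritized_system_def liab_bank_def assets_def payment_def
      liab_prio_def liab_upto_def)

lemma proportional_system_solution_iff:
  "is_solution proportional_system r \<longleftrightarrow> r 0 = 1/2 \<and> r 1 = 1/4 \<and> r 2 = 1" (is "_ \<longleftrightarrow> ?rhs")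
proof -
  have "is_solution proportional_system r \<longleftrightarrow>
      clears_at proportional_system r 0 \<and> clears_at proportional_system r 1 \<and> clears_at proportional_system r 2"
    by (simp add: is_solution_iff_clears_at banks_proportional_system)
  also have "\<dots> \<longleftrightarrow> ?rhs"
    by (simp only: clears_at_def proportional_system_balance) (auto simp: min_def max_def)
  finally show ?thesis .
qed

lemma prioritized_system_solution_iff:
  "is_solution prioritized_system r \<longleftrightarrow> r 0 = 3/4 \<and> r 1 = 1/2 \<and> r 2 = 1" (is "_ \<longleftrightarrow> ?rhs")
proof -
  have "is_solution prioritized_system r \<longleftrightarrow>
      clears_at prioritized_system r 0 \<and> clears_at prioritized_system r 1 \<and> clears_at prioritized_system r 2"
    by (simp add: is_solution_iff_clears_at banks_prioritized_system)
  also have "\<dots> \<longleftrightarrow> ?rhs"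
    by (simp only: clears_at_def prioritized_system_balance) (auto simp: min_def max_def)
  finally show ?thesis .
qed

lemma wf_proportional_system: "wf_fsys proportional_system"
  by (simp add: wf_fsys_def proportional_system_def)

lemma wf_prioritized_system: "wf_fsys prioritized_system"
  by (simp add: wf_fsys_def prioritized_system_def)

lemma reprioritized_proportional_system: "reprioritized proportional_system 0 prioritized_system"
  unfolding reprioritized_def
  by (auto simp: proportional_system_def prioritized_system_def less_Suc_eq numeral_2_eq_2
      numeral_3_eq_3)

theorem mainTheorem8:
  shows "\<exists>S v r. wf_fsys S \<and> v \<in> banks S \<and> unique_solution S r \<and>
           (\<exists>S' r'. reprioritized S v S' \<and> wf_fsys S' \<and> unique_solution S' r' \<and> r' v > r v)"
proof (intro exI conjI)
  let ?r = "\<lambda>i::nat. if i = 0 then 1/2 else if i = 1 then 1/4 else 1 :: real"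
  let ?r' = "\<lambda>i::nat. if i = 0 then 3/4 else if i = 1 then 1/2 else 1 :: real"
  show "unique_solution proportional_system ?r"
    by (rule unique_solutionI) (auto simp: proportional_system_solution_iff banks_proportional_system)
  show "unique_solution prioritized_system ?r'"
    by (rule unique_solutionI) (auto simp: prioritized_system_solution_iff banks_prioritized_system)
  show "(0::nat) \<in> banks proportional_system"
    by (simp add: banks_proportional_system)
  show "?r 0 < ?r' 0"
    by simp
qed (fact wf_proportional_system wf_prioritized_system reprioritized_proportional_system)+

end
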